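(* Let $(G,\cdot,N,\star,\odot)$ be a left skew bracoid, and for $g\in G$ let $\alpha(g):N\to N$ be the map ${}^{\alpha(g)}\eta=\overline{(g\odot e_N)}\star(g\odot\eta)\star\overline{\eta}$. Then for all $g,h\in G$ and $\mu,\eta\in N$: (1) ${}^{\alpha(g)}(\eta\star\mu)=({}^{\alpha(g)}\eta)\star\eta\star({}^{\alpha(g)}\mu)\star\overline{\eta}$; (2) ${}^{\alpha(g)}e_N={}^{\alpha(e_G)}\eta=e_N$; (3) ${}^{\alpha(g)}\overline{\eta}=\overline{\eta}\star\overline{({}^{\alpha(g)}\eta)}\star\eta$; (4) ${}^{\alpha(gh)}\eta=({}^{\alpha(g)}({}^{\alpha(h)}\eta))\star({}^{\alpha(h)}\eta)\star({}^{\alpha(g)}\eta)$.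
   Context: For a group $(N,\star)$, $e_N$ denotes its identity and $\overline{\eta}$ the inverse of $\eta$; for a group $(G,\cdot)$, $e_G$ is its identity. A left skew bracoid is a 5-tuple $(G,\cdot,N,\star,\odot)$ where $(G,\cdot)$ and $(N,\star)$ are groups and $\odot$ is a transitive (left) action of $(G,\cdot)$ on the set $N$ such that $g\odot(\mu\star\eta)=(g\odot\mu)\star\overline{(g\odot e_N)}\star(g\odot\eta)$ for all $g\in G$, $\mu,\eta\in N$. *)

theory Defs
  imports "HOL-Algebra.Group_Action"
begin

definition left_skew_bracoid ::
  "('g, 'a) monoid_scheme \<Rightarrow> ('n, 'b) monoid_scheme \<Rightarrow> ('g \<Rightarrow> 'n \<Rightarrow> 'n) \<Rightarrow> bool" where
  "left_skew_bracoid G N act \<longleftrightarrow>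
     group G \<and> group N \<and> transitive_action G (carrier N) act \<and>
     (\<forall>g \<in> carrier G. \<forall>\<mu> \<in> carrier N. \<forall>\<eta> \<in> carrier N.
        act g (\<mu> \<otimes>\<^bsub>N\<^esub> \<eta>) =
          act g \<mu> \<otimes>\<^bsub>N\<^esub> inv\<^bsub>N\<^esub> (act g \<one>\<^bsub>N\<^esub>) \<otimes>\<^bsub>N\<^esub> act g \<eta>)"

definition bracoid_alpha ::
  "('n, 'b) monoid_scheme \<Rightarrow> ('g \<Rightarrow> 'n \<Rightarrow> 'n) \<Rightarrow> 'g \<Rightarrow> 'n \<Rightarrow> 'n" where
  "bracoid_alpha N act g \<eta> =
     inv\<^bsub>N\<^esub> (act g \<one>\<^bsub>N\<^esub>) \<otimes>\<^bsub>N\<^esub> act g \<eta> \<otimes>\<^bsub>N\<^esub> inv\<^bsub>N\<^esub> \<eta>"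

end

theory Submission
  imports Defs
begin

text \<open>The map \<open>\<lambda>(g) \<eta> = (g \<odot> e)\<inverse> \<star> (g \<odot> \<eta>)\<close> is an endomorphism of \<open>N\<close> (this is exactly the
  bracoid law), and \<open>g \<mapsto> \<lambda>(g)\<close> turns the action into composition. Since
  \<open>\<alpha>(g) \<eta> = \<lambda>(g) \<eta> \<star> \<eta>\<inverse>\<close>, all four identities are then routine group computations.\<close>

definition bracoid_lambda ::
  "('n, 'b) monoid_scheme \<Rightarrow> ('g \<Rightarrow> 'n \<Rightarrow> 'n) \<Rightarrow> 'g \<Rightarrow> 'n \<Rightarrow> 'n" where
  "bracoid_lambda N act g \<eta> = inv\<^bsub>N\<^esub> (act g \<one>\<^bsub>N\<^esub>) \<otimes>\<^bsub>N\<^esub> act g \<eta>"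

lemma bracoid_alpha_eq_lambda:
  "bracoid_alpha N act g \<eta> = bracoid_lambda N act g \<eta> \<otimes>\<^bsub>N\<^esub> inv\<^bsub>N\<^esub> \<eta>"
  unfolding bracoid_alpha_def bracoid_lambda_def ..

lemma (in group) m_inv_cancel_left [simp]:
  "\<lbrakk>x \<in> carrier G; y \<in> carrier G\<rbrakk> \<Longrightarrow> x \<otimes> (inv x \<otimes> y) = y"
  by (simp flip: m_assoc)

lemma (in group) inv_m_cancel_left [simp]:
  "\<lbrakk>x \<in> carrier G; y \<in> carrier G\<rbrakk> \<Longrightarrow> inv x \<otimes> (x \<otimes> y) = y"
  by (simp flip: m_assoc)

locale bracoid_action = group_action G "carrier N" act + N: group N
  for G (structure) and N (structure) and act +
  assumes act_mult:
    "\<lbrakk>g \<in> carrier G; \<mu> \<in> carrier N; \<eta> \<in> carrier N\<rbrakk> \<Longrightarrow>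
      act g (\<mu> \<otimes>\<^bsub>N\<^esub> \<eta>) = act g \<mu> \<otimes>\<^bsub>N\<^esub> inv\<^bsub>N\<^esub> (act g \<one>\<^bsub>N\<^esub>) \<otimes>\<^bsub>N\<^esub> act g \<eta>"

lemma left_skew_bracoid_imp_bracoid_action:
  "left_skew_bracoid G N act \<Longrightarrow> bracoid_action G N act"
  unfolding left_skew_bracoid_def bracoid_action_def bracoid_action_axioms_def transitive_action_def
  by blast

context bracoid_action
begin

lemma act_closed [simp]: "\<lbrakk>g \<in> carrier G; \<eta> \<in> carrier N\<rbrakk> \<Longrightarrow> act g \<eta> \<in> carrier N"
  using element_image by blast

lemma act_one [simp]: "\<eta> \<in> carrier N \<Longrightarrow> act \<one>\<^bsub>G\<^esub> \<eta> = \<eta>"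
  by (metis id_eq_one restrict_apply')

lemma lambda_closed [simp]:
  "\<lbrakk>g \<in> carrier G; \<eta> \<in> carrier N\<rbrakk> \<Longrightarrow> bracoid_lambda N act g \<eta> \<in> carrier N"
  unfolding bracoid_lambda_def by simp

lemma lambda_group_hom:
  assumes g: "g \<in> carrier G"
  shows "group_hom N N (bracoid_lambda N act g)"
proof -
  have "bracoid_lambda N act g (\<mu> \<otimes>\<^bsub>N\<^esub> \<eta>) =
      bracoid_lambda N act g \<mu> \<otimes>\<^bsub>N\<^esub> bracoid_lambda N act g \<eta>"
    if "\<mu> \<in> carrier N" "\<eta> \<in> carrier N" for \<mu> \<eta>
    unfolding bracoid_lambda_def using g that by (simp add: act_mult N.m_assoc)
  then show ?thesis
    using g by (intro group_hom.intro group_hom_axioms.intro homI) (simp_all add: N.group_axioms)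
qed

lemma lambda_one_left: "\<eta> \<in> carrier N \<Longrightarrow> bracoid_lambda N act \<one>\<^bsub>G\<^esub> \<eta> = \<eta>"
  unfolding bracoid_lambda_def by simp

lemma lambda_composition:
  assumes g: "g \<in> carrier G" and h: "h \<in> carrier G" and \<eta>: "\<eta> \<in> carrier N"
  shows "bracoid_lambda N act (g \<otimes>\<^bsub>G\<^esub> h) \<eta> =
    bracoid_lambda N act g (bracoid_lambda N act h \<eta>)"
proof -
  interpret lambda: group_hom N N "bracoid_lambda N act g" by (rule lambda_group_hom[OF g])
  let ?e\<^sub>g = "act g \<one>\<^bsub>N\<^esub>" and ?e\<^sub>h = "act h \<one>\<^bsub>N\<^esub>"
  have "bracoid_lambda N act g (bracoid_lambda N act h \<eta>) =
      inv\<^bsub>N\<^esub> (bracoid_lambda N act g ?e\<^sub>h) \<otimes>\<^bsub>N\<^esub> bracoid_lambda N act g (act h \<eta>)"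
    unfolding bracoid_lambda_def[of N act h] using g h \<eta> by simp
  also have "\<dots> = inv\<^bsub>N\<^esub> (act g ?e\<^sub>h) \<otimes>\<^bsub>N\<^esub> ?e\<^sub>g \<otimes>\<^bsub>N\<^esub> inv\<^bsub>N\<^esub> ?e\<^sub>g \<otimes>\<^bsub>N\<^esub> act g (act h \<eta>)"
    unfolding bracoid_lambda_def using g h \<eta> by (simp add: N.inv_mult_group N.m_assoc)
  also have "\<dots> = bracoid_lambda N act (g \<otimes>\<^bsub>G\<^esub> h) \<eta>"
    unfolding bracoid_lambda_def using g h \<eta> by (simp add: N.m_assoc composition_rule)
  finally show ?thesis ..
qed

lemma alpha_mult:
  assumes g: "g \<in> carrier G" and \<eta>: "\<eta> \<in> carrier N" and \<mu>: "\<mu> \<in> carrier N"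
  shows "bracoid_alpha N act g (\<eta> \<otimes>\<^bsub>N\<^esub> \<mu>) =
    bracoid_alpha N act g \<eta> \<otimes>\<^bsub>N\<^esub> \<eta> \<otimes>\<^bsub>N\<^esub> bracoid_alpha N act g \<mu> \<otimes>\<^bsub>N\<^esub> inv\<^bsub>N\<^esub> \<eta>"
proof -
  interpret lambda: group_hom N N "bracoid_lambda N act g" by (rule lambda_group_hom[OF g])
  show ?thesis
    unfolding bracoid_alpha_eq_lambda using g \<eta> \<mu> by (simp add: N.m_assoc N.inv_mult_group)
qed

lemma alpha_one: "g \<in> carrier G \<Longrightarrow> bracoid_alpha N act g \<one>\<^bsub>N\<^esub> = \<one>\<^bsub>N\<^esub>"
  unfolding bracoid_alpha_def by simp

lemma alpha_one_left: "\<eta> \<in> carrier N \<Longrightarrow> bracoid_alpha N act \<one>\<^bsub>G\<^esub> \<eta> = \<one>\<^bsub>N\<^esub>"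
  unfolding bracoid_alpha_eq_lambda by (simp add: lambda_one_left)

lemma alpha_inv:
  assumes g: "g \<in> carrier G" and \<eta>: "\<eta> \<in> carrier N"
  shows "bracoid_alpha N act g (inv\<^bsub>N\<^esub> \<eta>) =
    inv\<^bsub>N\<^esub> \<eta> \<otimes>\<^bsub>N\<^esub> inv\<^bsub>N\<^esub> (bracoid_alpha N act g \<eta>) \<otimes>\<^bsub>N\<^esub> \<eta>"
proof -
  interpret lambda: group_hom N N "bracoid_lambda N act g" by (rule lambda_group_hom[OF g])
  show ?thesis
    unfolding bracoid_alpha_eq_lambda using g \<eta> by (simp add: N.m_assoc N.inv_mult_group)
qed

lemma alpha_composition:
  assumes g: "g \<in> carrier G" and h: "h \<in> carrier G" and \<eta>: "\<eta> \<in> carrier N"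
  shows "bracoid_alpha N act (g \<otimes>\<^bsub>G\<^esub> h) \<eta> =
    bracoid_alpha N act g (bracoid_alpha N act h \<eta>) \<otimes>\<^bsub>N\<^esub> bracoid_alpha N act h \<eta>
      \<otimes>\<^bsub>N\<^esub> bracoid_alpha N act g \<eta>"
proof -
  interpret lambda: group_hom N N "bracoid_lambda N act g" by (rule lambda_group_hom[OF g])
  show ?thesis
    unfolding bracoid_alpha_eq_lambda lambda_composition[OF g h \<eta>]
    using g h \<eta> by (simp add: N.m_assoc)
qed

end

theorem lemma2p4:
  fixes G :: "('g, 'a) monoid_scheme" and N :: "('n, 'b) monoid_scheme"
    and act :: "'g \<Rightarrow> 'n \<Rightarrow> 'n"
  assumes "left_skew_bracoid G N act"
    and "g \<in> carrier G" and "h \<in> carrier G"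
    and "\<mu> \<in> carrier N" and "\<eta> \<in> carrier N"
  shows "(bracoid_alpha N act g (\<eta> \<otimes>\<^bsub>N\<^esub> \<mu>) =
           bracoid_alpha N act g \<eta> \<otimes>\<^bsub>N\<^esub> \<eta> \<otimes>\<^bsub>N\<^esub> bracoid_alpha N act g \<mu> \<otimes>\<^bsub>N\<^esub> inv\<^bsub>N\<^esub> \<eta>) \<and>
        (bracoid_alpha N act g \<one>\<^bsub>N\<^esub> = \<one>\<^bsub>N\<^esub>) \<and>
        (bracoid_alpha N act \<one>\<^bsub>G\<^esub> \<eta> = \<one>\<^bsub>N\<^esub>) \<and>
        (bracoid_alpha N act g (inv\<^bsub>N\<^esub> \<eta>) =
           inv\<^bsub>N\<^esub> \<eta> \<otimes>\<^bsub>N\<^esub> inv\<^bsub>N\<^esub> (bracoid_alpha N act g \<eta>) \<otimes>\<^bsub>N\<^esub> \<eta>) \<and>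
        (bracoid_alpha N act (g \<otimes>\<^bsub>G\<^esub> h) \<eta> =
           bracoid_alpha N act g (bracoid_alpha N act h \<eta>) \<otimes>\<^bsub>N\<^esub> bracoid_alpha N act h \<eta>
             \<otimes>\<^bsub>N\<^esub> bracoid_alpha N act g \<eta>)"
proof -
  interpret bracoid_action G N act
    using assms(1) by (rule left_skew_bracoid_imp_bracoid_action)
  show ?thesis
    using assms(2-5)
    by (simp add: alpha_mult alpha_one alpha_one_left alpha_inv alpha_composition)
qed

end
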